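(* Let $f:\mathbb{N}^k\to\mathbb{N}$ be a function in the class $\mathcal{G}$. Then for all but finitely many positive integers $s$ there exists a $\lambda$-term $E$ such that (1) for all $n_1,\dots,n_k\in\mathbb{N}$, $E\,\rho(n_1)\cdots\rho(n_k)=_{\beta\eta}\rho(f(n_1,\dots,n_k))$, and (2) $\vdash E:\omega_{\tau(s)}\to\cdots\to\omega_{\tau(s)}\to\omega_{\tau(s)}$ (with $k$ arguments), where $\tau(s)=(\alpha^{s}\to\alpha)\to\alpha$ with $\alpha=\omega_o$, i.e. $\tau(s)$ is the type of an $s$-tuple of numerals.
   Context: We work in the simply typed $\lambda$-calculus (type assignment to untyped $\lambda$-terms) with a single base type $o$. For a type $\tau$, $\omega_\tau=(\tau\to\tau)\to\tau\to\tau$, and $\beta_1^{s}\to\gamma$ abbreviates $\beta_1\to\cdots\to\beta_1\to\gamma$ with $s$ copies of $\beta_1$. The Church numeral of $n$ is $\rho(n)=\lambda f x.f^{n}x$ (so $\rho(0)=\lambda fx.x$, $\rho(1)=\lambda fx.fx$, etc.); it can be assigned type $\omega_\tau$ for every $\tau$. Equality $=_{\beta\eta}$ is $\beta\eta$-conversion. Extended polynomials: the smallest class of functions over $\mathbb{N}$ containing the constants $0$ and $1$, projections, addition, multiplication and $\mathrm{ifzero}(n,m,p)=(\text{if } n=0 \text{ then } m \text{ else } p)$, closed under composition. $\mathcal{G}$ is the smallest class of functions over $\mathbb{N}$ that is closed under composition and contains: all extended polynomials; for every $l\geq 2$ the function $f_1^{l}(m,n_1,\dots,n_l)=n_i$ where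 $i=(m\bmod l)+1$; and for every $l\geq 1$ the function $f_2^{l}(m,n_1,n_2)=(\text{if } m\leq l \text{ then } n_1 \text{ else } n_2)$. *)

theory Defs
  imports Main
begin

datatype dB = Var nat | App dB dB | Abs dB

primrec lift :: "dB \<Rightarrow> nat \<Rightarrow> dB" where
  "lift (Var i) k = (if i < k then Var i else Var (Suc i))"
| "lift (App s t) k = App (lift s k) (lift t k)"
| "lift (Abs s) k = Abs (lift s (Suc k))"

primrec subst :: "dB \<Rightarrow> dB \<Rightarrow> nat \<Rightarrow> dB" where
  "subst (Var i) t k = (if k < i then Var (i - 1) else if i = k then t else Var i)"
| "subst (App s u) t k = App (subst s t k) (subst u t k)"
| "subst (Abs s) t k = Abs (subst s (lift t 0) (Suc k))"

primrec free :: "dB \<Rightarrow> nat \<Rightarrow> bool" where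
  "free (Var j) i = (j = i)"
| "free (App s t) i = (free s i \<or> free t i)"
| "free (Abs s) i = free s (Suc i)"

inductive beta :: "dB \<Rightarrow> dB \<Rightarrow> bool" where
  beta_red: "beta (App (Abs s) t) (subst s t 0)"
| beta_appL: "beta s t \<Longrightarrow> beta (App s u) (App t u)"
| beta_appR: "beta s t \<Longrightarrow> beta (App u s) (App u t)"
| beta_abs: "beta s t \<Longrightarrow> beta (Abs s) (Abs t)"

inductive eta :: "dB \<Rightarrow> dB \<Rightarrow> bool" where
  eta_red: "\<not> free s 0 \<Longrightarrow> eta (Abs (App s (Var 0))) (subst s (Var 0) 0)"
| eta_appL: "eta s t \<Longrightarrow> eta (App s u) (App t u)"
| eta_appR: "eta s t \<Longrightarrow> eta (App u s) (App u t)"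
| eta_abs: "eta s t \<Longrightarrow> eta (Abs s) (Abs t)"

definition beta_eta_conv :: "dB \<Rightarrow> dB \<Rightarrow> bool" where
  "beta_eta_conv = (\<lambda>s t. beta s t \<or> eta s t \<or> beta t s \<or> eta t s)\<^sup>*\<^sup>*"

definition apps :: "dB \<Rightarrow> dB list \<Rightarrow> dB" where
  "apps E ts = foldl App E ts"

text \<open>Church numeral  rho n = \<lambda>f x. f^n x  (f = Var 1, x = Var 0).\<close>
definition church :: "nat \<Rightarrow> dB" where
  "church n = Abs (Abs ((App (Var 1) ^^ n) (Var 0)))"

datatype ty = Base | Fun ty ty

inductive typing :: "ty list \<Rightarrow> dB \<Rightarrow> ty \<Rightarrow> bool" where
  typ_var: "i < length \<Gamma> \<Longrightarrow> \<Gamma> ! i = T \<Longrightarrow> typing \<Gamma> (Var i) T"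
| typ_abs: "typing (T # \<Gamma>) t U \<Longrightarrow> typing \<Gamma> (Abs t) (Fun T U)"
| typ_app: "typing \<Gamma> s (Fun T U) \<Longrightarrow> typing \<Gamma> t T \<Longrightarrow> typing \<Gamma> (App s t) U"

definition omega :: "ty \<Rightarrow> ty" where
  "omega \<tau> = Fun (Fun \<tau> \<tau>) (Fun \<tau> \<tau>)"

definition arrows :: "nat \<Rightarrow> ty \<Rightarrow> ty \<Rightarrow> ty" where
  "arrows s b g = (Fun b ^^ s) g"

definition alpha :: ty where
  "alpha = omega Base"

definition tuple_ty :: "nat \<Rightarrow> ty" where
  "tuple_ty s = Fun (arrows s alpha alpha) alpha"

text \<open>A k-ary function N^k \<rightarrow> N is represented as a function on lists; only its
values on lists of length k matter.  ExtPoly k f / G k f: f is generated as a k-ary function.\<close>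

inductive ExtPoly :: "nat \<Rightarrow> (nat list \<Rightarrow> nat) \<Rightarrow> bool" where
  ep_zero: "ExtPoly k (\<lambda>xs. 0)"
| ep_one: "ExtPoly k (\<lambda>xs. 1)"
| ep_proj: "i < k \<Longrightarrow> ExtPoly k (\<lambda>xs. xs ! i)"
| ep_add: "ExtPoly 2 (\<lambda>xs. xs ! 0 + xs ! 1)"
| ep_mult: "ExtPoly 2 (\<lambda>xs. xs ! 0 * xs ! 1)"
| ep_ifzero: "ExtPoly 3 (\<lambda>xs. if xs ! 0 = 0 then xs ! 1 else xs ! 2)"
| ep_comp: "ExtPoly m h \<Longrightarrow> (\<forall>j<m. ExtPoly k (gs j))
             \<Longrightarrow> ExtPoly k (\<lambda>xs. h (map (\<lambda>j. gs j xs) [0..<m]))"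

inductive G :: "nat \<Rightarrow> (nat list \<Rightarrow> nat) \<Rightarrow> bool" where
  g_extpoly: "ExtPoly k f \<Longrightarrow> G k f"
| g_f1: "l \<ge> 2 \<Longrightarrow> G (Suc l) (\<lambda>xs. xs ! Suc (xs ! 0 mod l))"
| g_f2: "l \<ge> 1 \<Longrightarrow> G 3 (\<lambda>xs. if xs ! 0 \<le> l then xs ! 1 else xs ! 2)"
| g_comp: "G m h \<Longrightarrow> (\<forall>j<m. G k (gs j))
             \<Longrightarrow> G k (\<lambda>xs. h (map (\<lambda>j. gs j xs) [0..<m]))"

definition in_G :: "nat \<Rightarrow> (nat list \<Rightarrow> nat) \<Rightarrow> bool" where
  "in_G k f = (\<exists>g. G k g \<and> (\<forall>xs. length xs = k \<longrightarrow> f xs = g xs))"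

end

theory Submission
  imports Defs
begin

(* Every extended polynomial is defined by a term of type omega_tau -> ... -> omega_tau, for
   every tau (Schwichtenberg), and definability is closed under composition.  The two extra
   generators of G need the type tau(s) of s-tuples of numerals.  A numeral m of type
   omega_tau(s) iterates m times a term that rearranges the components of a tuple: shifting
   them, or rotating the first l of them.  Starting from the unit tuple (1, 0, ..., 0), its
   n-th component then becomes 1 exactly if m = n, resp. m mod l = n.  Branching on that
   component, a numeral of type alpha only, tests these conditions at type omega_tau(s)
   provided n < s, and f_1, f_2 are finite cascades of such tests.  Hence each f in G is
   definable at tau(s) for all s beyond a bound depending on f. *)

abbreviation beta_reds :: "dB \<Rightarrow> dB \<Rightarrow> bool"  (infixl "\<rightarrow>\<^sub>\<beta>\<^sup>*" 50)
  where "s \<rightarrow>\<^sub>\<beta>\<^sup>* t \<equiv> beta\<^sup>*\<^sup>* s t"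

notation beta_eta_conv (infixl "=\<^sub>\<beta>\<^sub>\<eta>" 50)
notation typing ("_ \<turnstile> _ : _" [50, 50, 50] 50)
notation Fun (infixr "\<rightarrow>" 200)

primrec vars_below :: "nat \<Rightarrow> dB \<Rightarrow> bool" where
  "vars_below k (Var i) = (i < k)"
| "vars_below k (App s t) = (vars_below k s \<and> vars_below k t)"
| "vars_below k (Abs t) = vars_below (Suc k) t"

abbreviation closed :: "dB \<Rightarrow> bool" where
  "closed \<equiv> vars_below 0"

lemma vars_below_mono: "vars_below k t \<Longrightarrow> k \<le> j \<Longrightarrow> vars_below j t"
  by (induction t arbitrary: k j) auto

lemma lift_vars_below: "vars_below k t \<Longrightarrow> k \<le> j \<Longrightarrow> lift t j = t"
  by (induction t arbitrary: k j) auto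

lemma subst_vars_below: "vars_below k t \<Longrightarrow> k \<le> j \<Longrightarrow> subst t u j = t"
  by (induction t arbitrary: k j u) auto

lemma lift_closed [simp]: "closed t \<Longrightarrow> lift t j = t"
  using lift_vars_below by blast

lemma subst_closed [simp]: "closed t \<Longrightarrow> subst t u j = t"
  using subst_vars_below by blast

lemma closed_vars_below [simp]: "closed t \<Longrightarrow> vars_below k t"
  using vars_below_mono by blast

lemma subst_lift [simp]: "subst (lift t k) u k = t"
  by (induction t arbitrary: k u) auto

lemma free_lift [simp]: "\<not> free (lift t k) k"
  by (induction t arbitrary: k) auto

lemma vars_below_funpow_App [simp]:
  "vars_below k ((App F ^^ n) t) = ((n = 0 \<or> vars_below k F) \<and> vars_below k t)"
  by (induction n) auto

lemma lift_funpow_App [simp]: "lift ((App F ^^ n) t) k = (App (lift F k) ^^ n) (lift t k)"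
  by (induction n) auto

lemma subst_funpow_App [simp]: "subst ((App F ^^ n) t) u k = (App (subst F u k) ^^ n) (subst t u k)"
  by (induction n) auto

lemma vars_below_funpow_Abs [simp]: "vars_below k ((Abs ^^ n) t) = vars_below (k + n) t"
  by (induction n arbitrary: k) auto

lemma subst_funpow_Abs: "closed u \<Longrightarrow> subst ((Abs ^^ n) t) u k = (Abs ^^ n) (subst t u (k + n))"
  by (induction n arbitrary: k) auto

lemma closed_church [simp]: "closed (church n)"
  by (simp add: church_def)

lemma apps_Nil [simp]: "apps t [] = t"
  by (simp add: apps_def)

lemma apps_Cons [simp]: "apps t (u # us) = apps (App t u) us"
  by (simp add: apps_def)

lemma apps_append [simp]: "apps t (us @ vs) = apps (apps t us) vs"
  by (simp add: apps_def)

lemma lift_apps [simp]: "lift (apps t us) k = apps (lift t k) (map (\<lambda>u. lift u k) us)"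
  by (induction us arbitrary: t) auto

lemma subst_apps [simp]: "subst (apps t us) v k = apps (subst t v k) (map (\<lambda>u. subst u v k) us)"
  by (induction us arbitrary: t) auto

lemma vars_below_apps [simp]: "vars_below k (apps t us) = (vars_below k t \<and> (\<forall>u\<in>set us. vars_below k u))"
  by (induction us arbitrary: t) auto

section \<open>Reduction and conversion\<close>

lemma rtranclp_map:
  assumes "\<And>x y. R x y \<Longrightarrow> S (f x) (f y)" and "R\<^sup>*\<^sup>* x y"
  shows "S\<^sup>*\<^sup>* (f x) (f y)"
  using assms(2) by induction (auto intro: rtranclp.rtrancl_into_rtrancl assms(1))

lemma beta_reds_AppL: "s \<rightarrow>\<^sub>\<beta>\<^sup>* t \<Longrightarrow> App s u \<rightarrow>\<^sub>\<beta>\<^sup>* App t u"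
  by (rule rtranclp_map[where f="\<lambda>x. App x u"]) (auto intro: beta.intros)

lemma beta_reds_AppR: "s \<rightarrow>\<^sub>\<beta>\<^sup>* t \<Longrightarrow> App u s \<rightarrow>\<^sub>\<beta>\<^sup>* App u t"
  by (rule rtranclp_map[where f="\<lambda>x. App u x"]) (auto intro: beta.intros)

lemma beta_reds_Abs: "s \<rightarrow>\<^sub>\<beta>\<^sup>* t \<Longrightarrow> Abs s \<rightarrow>\<^sub>\<beta>\<^sup>* Abs t"
  by (rule rtranclp_map[where f=Abs]) (auto intro: beta.intros)

lemma beta_reds_funpow_Abs: "s \<rightarrow>\<^sub>\<beta>\<^sup>* t \<Longrightarrow> (Abs ^^ n) s \<rightarrow>\<^sub>\<beta>\<^sup>* (Abs ^^ n) t"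
  by (induction n) (auto intro: beta_reds_Abs)

lemma beta_reds_apps: "s \<rightarrow>\<^sub>\<beta>\<^sup>* t \<Longrightarrow> apps s us \<rightarrow>\<^sub>\<beta>\<^sup>* apps t us"
  by (induction us arbitrary: s t) (auto intro: beta_reds_AppL)

lemma beta_reds_red: "App (Abs s) t \<rightarrow>\<^sub>\<beta>\<^sup>* subst s t 0"
  by (auto intro: beta.intros)

lemma beta_reds_church_App: "App (App (church n) u) v \<rightarrow>\<^sub>\<beta>\<^sup>* (App u ^^ n) v"
proof -
  have "App (church n) u \<rightarrow>\<^sub>\<beta>\<^sup>* Abs ((App (lift u 0) ^^ n) (Var 0))"
    using beta_reds_red[of "Abs ((App (Var 1) ^^ n) (Var 0))" u] by (simp add: church_def)
  then have "App (App (church n) u) v \<rightarrow>\<^sub>\<beta>\<^sup>* App (Abs ((App (lift u 0) ^^ n) (Var 0))) v"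
    by (rule beta_reds_AppL)
  also have "\<dots> \<rightarrow>\<^sub>\<beta>\<^sup>* (App u ^^ n) v"
    using beta_reds_red[of "(App (lift u 0) ^^ n) (Var 0)" v] by simp
  finally show ?thesis .
qed

lemma beta_reds_funpow_App_iterate:
  "(App (Abs ((App (lift F 0) ^^ n) (Var 0))) ^^ m) t \<rightarrow>\<^sub>\<beta>\<^sup>* (App F ^^ (m * n)) t"
proof (induction m)
  case 0
  then show ?case by simp
next
  case (Suc m)
  have "(App (Abs ((App (lift F 0) ^^ n) (Var 0))) ^^ Suc m) t
      \<rightarrow>\<^sub>\<beta>\<^sup>* App (Abs ((App (lift F 0) ^^ n) (Var 0))) ((App F ^^ (m * n)) t)"
    using Suc by (simp add: beta_reds_AppR)
  also have "\<dots> \<rightarrow>\<^sub>\<beta>\<^sup>* (App F ^^ n) ((App F ^^ (m * n)) t)"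
    using beta_reds_red[of "(App (lift F 0) ^^ n) (Var 0)"] by simp
  also have "\<dots> = (App F ^^ (Suc m * n)) t"
    by (simp add: funpow_add add.commute)
  finally show ?case .
qed

lemma beta_eta_conv_symclp: "beta_eta_conv = (symclp (sup beta eta))\<^sup>*\<^sup>*"
  unfolding beta_eta_conv_def symclp_def by (simp add: sup_fun_def disj_commute disj_left_commute)

lemma beta_eta_conv_refl [simp]: "s =\<^sub>\<beta>\<^sub>\<eta> s"
  by (simp add: beta_eta_conv_def)

lemma beta_eta_conv_trans [trans]: "s =\<^sub>\<beta>\<^sub>\<eta> t \<Longrightarrow> t =\<^sub>\<beta>\<^sub>\<eta> u \<Longrightarrow> s =\<^sub>\<beta>\<^sub>\<eta> u"
  by (simp add: beta_eta_conv_def)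

lemma beta_reds_conv: "s \<rightarrow>\<^sub>\<beta>\<^sup>* t \<Longrightarrow> s =\<^sub>\<beta>\<^sub>\<eta> t"
  unfolding beta_eta_conv_symclp by (rule rtranclp_map[where f=id, simplified]) auto

lemma beta_reds_conv_trans [trans]: "s \<rightarrow>\<^sub>\<beta>\<^sup>* t \<Longrightarrow> t =\<^sub>\<beta>\<^sub>\<eta> u \<Longrightarrow> s =\<^sub>\<beta>\<^sub>\<eta> u"
  using beta_reds_conv beta_eta_conv_trans by blast

lemma eta_conv: "\<not> free s 0 \<Longrightarrow> Abs (App s (Var 0)) =\<^sub>\<beta>\<^sub>\<eta> subst s (Var 0) 0"
  unfolding beta_eta_conv_symclp by (rule r_into_rtranclp) (simp add: symclp_def eta_red)

lemma eta_conv_lift: "Abs (App (lift t 0) (Var 0)) =\<^sub>\<beta>\<^sub>\<eta> t"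
  using eta_conv[of "lift t 0"] by simp

lemma beta_eta_conv_AppL: "s =\<^sub>\<beta>\<^sub>\<eta> t \<Longrightarrow> App s u =\<^sub>\<beta>\<^sub>\<eta> App t u"
  unfolding beta_eta_conv_symclp
  by (rule rtranclp_map[where f="\<lambda>x. App x u"]) (auto simp: symclp_def intro: beta.intros eta.intros)

lemma beta_eta_conv_AppR: "s =\<^sub>\<beta>\<^sub>\<eta> t \<Longrightarrow> App u s =\<^sub>\<beta>\<^sub>\<eta> App u t"
  unfolding beta_eta_conv_symclp
  by (rule rtranclp_map[where f="\<lambda>x. App u x"]) (auto simp: symclp_def intro: beta.intros eta.intros)

lemma beta_eta_conv_Abs: "s =\<^sub>\<beta>\<^sub>\<eta> t \<Longrightarrow> Abs s =\<^sub>\<beta>\<^sub>\<eta> Abs t"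
  unfolding beta_eta_conv_symclp
  by (rule rtranclp_map[where f=Abs]) (auto simp: symclp_def intro: beta.intros eta.intros)

lemma beta_eta_conv_funpow_Abs: "s =\<^sub>\<beta>\<^sub>\<eta> t \<Longrightarrow> (Abs ^^ n) s =\<^sub>\<beta>\<^sub>\<eta> (Abs ^^ n) t"
  by (induction n) (auto intro: beta_eta_conv_Abs)

lemma beta_eta_conv_apps_head: "s =\<^sub>\<beta>\<^sub>\<eta> t \<Longrightarrow> apps s us =\<^sub>\<beta>\<^sub>\<eta> apps t us"
  by (induction us arbitrary: s t) (auto intro: beta_eta_conv_AppL)

lemma beta_eta_conv_apps_args:
  "list_all2 beta_eta_conv us vs \<Longrightarrow> apps t us =\<^sub>\<beta>\<^sub>\<eta> apps t vs"
proof (induction us vs arbitrary: t rule: list_all2_induct)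
  case Nil
  then show ?case by simp
next
  case (Cons u us v vs)
  have "apps (App t u) us =\<^sub>\<beta>\<^sub>\<eta> apps (App t v) us"
    using Cons.hyps(1) by (intro beta_eta_conv_apps_head beta_eta_conv_AppR)
  also have "\<dots> =\<^sub>\<beta>\<^sub>\<eta> apps (App t v) vs"
    by (rule Cons.IH)
  finally show ?case by simp
qed

text \<open>The head of \<open>us\<close> replaces the outermost binder, i.e. the index \<open>length us - 1\<close>
  of the remaining list.\<close>

fun subst_all :: "dB \<Rightarrow> dB list \<Rightarrow> dB" where
  "subst_all t [] = t"
| "subst_all t (u # us) = subst_all (subst t u (length us)) us"

lemma beta_reds_funpow_Abs_apps:
  "\<forall>u\<in>set us. closed u \<Longrightarrow> apps ((Abs ^^ length us) t) us \<rightarrow>\<^sub>\<beta>\<^sup>* subst_all t us"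
proof (induction us arbitrary: t)
  case Nil
  then show ?case by simp
next
  case (Cons u us)
  have "App (Abs ((Abs ^^ length us) t)) u \<rightarrow>\<^sub>\<beta>\<^sup>* (Abs ^^ length us) (subst t u (length us))"
    using beta_reds_red[of "(Abs ^^ length us) t" u] Cons.prems by (simp add: subst_funpow_Abs)
  then have "apps ((Abs ^^ length (u # us)) t) (u # us)
      \<rightarrow>\<^sub>\<beta>\<^sup>* apps ((Abs ^^ length us) (subst t u (length us))) us"
    by (simp add: beta_reds_apps)
  also have "\<dots> \<rightarrow>\<^sub>\<beta>\<^sup>* subst_all t (u # us)"
    using Cons by simp
  finally show ?case .
qed

lemma subst_all_App [simp]: "subst_all (App s t) us = App (subst_all s us) (subst_all t us)"
  by (induction us arbitrary: s t) auto

lemma subst_all_apps [simp]: "subst_all (apps t vs) us = apps (subst_all t us) (map (\<lambda>v. subst_all v us) vs)"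
  by (induction vs arbitrary: t) auto

lemma subst_all_closed [simp]: "closed t \<Longrightarrow> subst_all t us = t"
  by (induction us) auto

lemma subst_all_Var:
  assumes "\<forall>u\<in>set us. closed u"
  shows "subst_all (Var i) us = (if i < length us then us ! (length us - Suc i) else Var (i - length us))"
  using assms
proof (induction us arbitrary: i)
  case Nil
  then show ?case by simp
next
  case (Cons u us)
  consider "i < length us" | "i = length us" | "i > length us"
    by linarith
  then show ?case
  proof cases
    case 1
    then have "length us - i = Suc (length us - Suc i)" by simp
    with 1 Cons show ?thesis by simp
  next
    case 2
    with Cons show ?thesis by simp
  next
    case 3
    with Cons.prems Cons.IH[of "i - 1"] show ?thesis by auto
  qed
qed

definition bound_vars :: "nat \<Rightarrow> dB list" where
  "bound_vars n = map (\<lambda>i. Var (n - Suc i)) [0..<n]"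

lemma length_bound_vars [simp]: "length (bound_vars n) = n"
  by (simp add: bound_vars_def)

lemma bound_vars_nth: "i < n \<Longrightarrow> bound_vars n ! i = Var (n - Suc i)"
  by (simp add: bound_vars_def)

lemma subst_all_bound_vars:
  "\<forall>u\<in>set us. closed u \<Longrightarrow> map (\<lambda>v. subst_all v us) (bound_vars (length us)) = us"
  by (intro nth_equalityI) (auto simp: bound_vars_def subst_all_Var Suc_diff_Suc)

lemma subst_all_bound_vars_nth:
  "\<forall>u\<in>set us. closed u \<Longrightarrow> i < length us \<Longrightarrow> subst_all (bound_vars (length us) ! i) us = us ! i"
  using subst_all_bound_vars[of us] by (metis length_bound_vars nth_map)

lemma bound_vars_Suc: "bound_vars (Suc n) = map (\<lambda>v. lift v 0) (bound_vars n) @ [Var 0]"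
  by (auto simp: bound_vars_def Suc_diff_Suc)

lemma eta_conv_bound_vars: "closed t \<Longrightarrow> (Abs ^^ n) (apps t (bound_vars n)) =\<^sub>\<beta>\<^sub>\<eta> t"
proof (induction n)
  case 0
  then show ?case by (simp add: bound_vars_def)
next
  case (Suc n)
  have "(Abs ^^ Suc n) (apps t (bound_vars (Suc n)))
      = (Abs ^^ n) (Abs (App (lift (apps t (bound_vars n)) 0) (Var 0)))"
    using Suc.prems by (simp add: bound_vars_Suc funpow_Suc_right del: funpow.simps)
  also have "\<dots> =\<^sub>\<beta>\<^sub>\<eta> (Abs ^^ n) (apps t (bound_vars n))"
    by (intro beta_eta_conv_funpow_Abs eta_conv_lift)
  also have "\<dots> =\<^sub>\<beta>\<^sub>\<eta> t"
    using Suc by simp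
  finally show ?case .
qed

lemma arrows_0 [simp]: "arrows 0 T U = U"
  by (simp add: arrows_def)

lemma arrows_Suc [simp]: "arrows (Suc n) T U = T \<rightarrow> arrows n T U"
  by (simp add: arrows_def)

lemma typing_vars_below: "\<Gamma> \<turnstile> t : T \<Longrightarrow> vars_below (length \<Gamma>) t"
  by (induction rule: typing.induct) auto

lemma typing_closed: "[] \<turnstile> t : T \<Longrightarrow> closed t"
  using typing_vars_below by fastforce

lemma typing_append: "\<Gamma> \<turnstile> t : T \<Longrightarrow> \<Gamma> @ \<Delta> \<turnstile> t : T"
  by (induction rule: typing.induct) (auto intro: typing.intros simp: nth_append)

lemma typing_closed_any: "[] \<turnstile> t : T \<Longrightarrow> \<Gamma> \<turnstile> t : T"
  using typing_append[of "[]" t T \<Gamma>] by simp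

lemma typing_funpow_Abs: "replicate n T @ \<Gamma> \<turnstile> t : U \<Longrightarrow> \<Gamma> \<turnstile> (Abs ^^ n) t : arrows n T U"
proof (induction n arbitrary: \<Gamma>)
  case 0
  then show ?case by simp
next
  case (Suc n)
  then have "T # \<Gamma> \<turnstile> (Abs ^^ n) t : arrows n T U"
    by (simp add: replicate_app_Cons_same)
  then show ?case by (auto intro: typ_abs)
qed

lemma typing_apps:
  "\<Gamma> \<turnstile> t : arrows (length us) T U \<Longrightarrow> \<forall>u\<in>set us. \<Gamma> \<turnstile> u : T \<Longrightarrow> \<Gamma> \<turnstile> apps t us : U"
  by (induction us arbitrary: t) (auto intro: typ_app)

lemma typing_bound_vars: "v \<in> set (bound_vars n) \<Longrightarrow> replicate n T @ \<Gamma> \<turnstile> v : T"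
  by (auto simp: bound_vars_def nth_append intro!: typ_var)

lemma typing_church: "\<Gamma> \<turnstile> church n : omega T"
proof -
  have "T # (T \<rightarrow> T) # \<Gamma> \<turnstile> (App (Var 1) ^^ n) (Var 0) : T"
    by (induction n) (auto intro!: typ_app[where T=T] typ_var)
  then show ?thesis
    by (auto simp: church_def omega_def intro!: typ_abs)
qed

section \<open>Definable functions\<close>

definition definable :: "ty \<Rightarrow> nat \<Rightarrow> (nat list \<Rightarrow> nat) \<Rightarrow> bool" where
  "definable W k f \<longleftrightarrow> (\<exists>E. (\<forall>ns. length ns = k \<longrightarrow> apps E (map church ns) =\<^sub>\<beta>\<^sub>\<eta> church (f ns))
                           \<and> [] \<turnstile> E : arrows k W W)"

lemma definable_cong:
  "definable W k f \<Longrightarrow> (\<And>xs. length xs = k \<Longrightarrow> f xs = g xs) \<Longrightarrow> definable W k g"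
  unfolding definable_def by metis

lemma definable_by_body:
  assumes "replicate k W \<turnstile> t : W"
    and "\<And>ns. length ns = k \<Longrightarrow> subst_all t (map church ns) =\<^sub>\<beta>\<^sub>\<eta> church (f ns)"
  shows "definable W k f"
  unfolding definable_def
proof (intro exI conjI allI impI)
  show "[] \<turnstile> (Abs ^^ k) t : arrows k W W"
    using assms(1) by (intro typing_funpow_Abs) simp
  fix ns :: "nat list"
  assume "length ns = k"
  then have "apps ((Abs ^^ k) t) (map church ns) =\<^sub>\<beta>\<^sub>\<eta> subst_all t (map church ns)"
    using beta_reds_funpow_Abs_apps[of "map church ns" t] by (simp add: beta_reds_conv)
  also have "\<dots> =\<^sub>\<beta>\<^sub>\<eta> church (f ns)"
    using assms(2) \<open>length ns = k\<close> .
  finally show "apps ((Abs ^^ k) t) (map church ns) =\<^sub>\<beta>\<^sub>\<eta> church (f ns)" .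
qed

lemma definable_proj:
  assumes "i < k"
  shows "definable W k (\<lambda>xs. xs ! i)"
proof (rule definable_by_body[where t="bound_vars k ! i"])
  show "replicate k W \<turnstile> bound_vars k ! i : W"
    using assms typing_bound_vars[of _ k W "[]"] by simp
  fix ns :: "nat list"
  assume "length ns = k"
  then show "subst_all (bound_vars k ! i) (map church ns) =\<^sub>\<beta>\<^sub>\<eta> church (ns ! i)"
    using assms subst_all_bound_vars_nth[of "map church ns" i] by simp
qed

lemma definable_const: "definable (omega T) k (\<lambda>xs. c)"
  by (rule definable_by_body[where t="church c"]) (auto intro: typing_church)

lemma definable_comp:
  assumes h: "definable W m h" and gs: "\<forall>j<m. definable W k (gs j)"
  shows "definable W k (\<lambda>xs. h (map (\<lambda>j. gs j xs) [0..<m]))"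
proof -
  obtain H where H_typ: "[] \<turnstile> H : arrows m W W"
    and H_conv: "\<And>ns. length ns = m \<Longrightarrow> apps H (map church ns) =\<^sub>\<beta>\<^sub>\<eta> church (h ns)"
    using h unfolding definable_def by blast
  obtain Gs where Gs_typ: "\<And>j. j < m \<Longrightarrow> [] \<turnstile> Gs j : arrows k W W"
    and Gs_conv: "\<And>j ns. j < m \<Longrightarrow> length ns = k \<Longrightarrow> apps (Gs j) (map church ns) =\<^sub>\<beta>\<^sub>\<eta> church (gs j ns)"
    using gs unfolding definable_def by metis
  let ?args = "\<lambda>vs. map (\<lambda>j. apps (Gs j) vs) [0..<m]"
  show ?thesis
  proof (rule definable_by_body[where t="apps H (?args (bound_vars k))"])
    have "replicate k W \<turnstile> apps (Gs j) (bound_vars k) : W" if "j < m" for j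
      using typing_closed_any[OF Gs_typ[OF that], of "replicate k W"]
      by (intro typing_apps) (auto intro: typing_bound_vars[of _ _ _ "[]", simplified])
    then show "replicate k W \<turnstile> apps H (?args (bound_vars k)) : W"
      by (intro typing_apps) (auto intro: typing_closed_any[OF H_typ])
    fix ns :: "nat list"
    assume len: "length ns = k"
    have "map (\<lambda>v. subst_all v (map church ns)) (bound_vars k) = map church ns"
      using len subst_all_bound_vars[of "map church ns"] by simp
    then have "map (\<lambda>a. subst_all a (map church ns)) (?args (bound_vars k)) = ?args (map church ns)"
      using typing_closed[OF Gs_typ] by (auto intro!: map_cong)
    then have "subst_all (apps H (?args (bound_vars k))) (map church ns) = apps H (?args (map church ns))"
      using typing_closed[OF H_typ] by (simp only: subst_all_apps subst_all_closed)
    also have "\<dots> =\<^sub>\<beta>\<^sub>\<eta> apps H (map church (map (\<lambda>j. gs j ns) [0..<m]))"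
      using len by (auto intro!: beta_eta_conv_apps_args Gs_conv simp: list_all2_conv_all_nth)
    also have "\<dots> =\<^sub>\<beta>\<^sub>\<eta> church (h (map (\<lambda>j. gs j ns) [0..<m]))"
      by (rule H_conv) simp
    finally show "subst_all (apps H (?args (bound_vars k))) (map church ns)
        =\<^sub>\<beta>\<^sub>\<eta> church (h (map (\<lambda>j. gs j ns) [0..<m]))" .
  qed
qed

lemma definable_comp3:
  assumes "definable W 3 h" "definable W k g0" "definable W k g1" "definable W k g2"
  shows "definable W k (\<lambda>xs. h [g0 xs, g1 xs, g2 xs])"
proof -
  have "definable W k (\<lambda>xs. h (map (\<lambda>j. ([g0, g1, g2] ! j) xs) [0..<3]))"
    using assms by (intro definable_comp) (auto simp: less_Suc_eq numeral_3_eq_3)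
  then show ?thesis
    by (rule definable_cong) (simp add: numeral_3_eq_3 upt_rec)
qed

lemma definable_add: "definable (omega T) 2 (\<lambda>xs. xs ! 0 + xs ! 1)"
proof (rule definable_by_body)
  \<comment> \<open>\<open>\<lambda>f x. a f (b f x)\<close>\<close>
  define t where "t = Abs (Abs (App (App (Var 3) (Var 1)) (App (App (Var 2) (Var 1)) (Var 0))))"
  show "replicate 2 (omega T) \<turnstile> t : omega T"
    by (auto simp: t_def omega_def numeral_2_eq_2 intro!: typing.intros)
  fix ns :: "nat list"
  assume "length ns = 2"
  then obtain a b where ns: "ns = [a, b]"
    by (auto simp: numeral_2_eq_2 length_Suc_conv)
  have "App (App (church a) (Var 1)) (App (App (church b) (Var 1)) (Var 0))
      \<rightarrow>\<^sub>\<beta>\<^sup>* App (App (church a) (Var 1)) ((App (Var 1) ^^ b) (Var 0))"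
    by (intro beta_reds_AppR beta_reds_church_App)
  also have "\<dots> \<rightarrow>\<^sub>\<beta>\<^sup>* (App (Var 1) ^^ (a + b)) (Var 0)"
    using beta_reds_church_App by (simp add: funpow_add)
  finally show "subst_all t (map church ns) =\<^sub>\<beta>\<^sub>\<eta> church (ns ! 0 + ns ! 1)"
    by (simp add: ns t_def church_def beta_reds_Abs beta_reds_conv)
qed

lemma definable_mult: "definable (omega T) 2 (\<lambda>xs. xs ! 0 * xs ! 1)"
proof (rule definable_by_body)
  \<comment> \<open>\<open>\<lambda>f. a (b f)\<close>\<close>
  define t where "t = Abs (App (Var 2) (App (Var 1) (Var 0)))"
  show "replicate 2 (omega T) \<turnstile> t : omega T"
    by (auto simp: t_def omega_def numeral_2_eq_2 intro!: typing.intros)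
  fix ns :: "nat list"
  assume "length ns = 2"
  then obtain a b where ns: "ns = [a, b]"
    by (auto simp: numeral_2_eq_2 length_Suc_conv)
  define F where "F = Abs ((App (Var 1) ^^ b) (Var 0))"
  have "App (church a) (App (church b) (Var 0)) \<rightarrow>\<^sub>\<beta>\<^sup>* App (church a) F"
    using beta_reds_red[of "Abs ((App (Var 1) ^^ b) (Var 0))" "Var 0"]
    by (intro beta_reds_AppR) (simp add: F_def church_def)
  also have "\<dots> \<rightarrow>\<^sub>\<beta>\<^sup>* Abs ((App (lift F 0) ^^ a) (Var 0))"
    using beta_reds_red[of "Abs ((App (Var 1) ^^ a) (Var 0))" F] by (simp add: church_def)
  also have "\<dots> \<rightarrow>\<^sub>\<beta>\<^sup>* Abs ((App (Var 1) ^^ (a * b)) (Var 0))"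
    using beta_reds_funpow_App_iterate[where F="Var 1" and n=b and m=a] by (simp add: F_def beta_reds_Abs)
  finally show "subst_all t (map church ns) =\<^sub>\<beta>\<^sub>\<eta> church (ns ! 0 * ns ! 1)"
    by (simp add: ns t_def church_def beta_reds_Abs beta_reds_conv)
qed

lemma definable_ifzero: "definable (omega T) 3 (\<lambda>xs. if xs ! 0 = 0 then xs ! 1 else xs ! 2)"
proof (rule definable_by_body)
  \<comment> \<open>\<open>\<lambda>f x. n (\<lambda>_. b f x) (a f x)\<close>\<close>
  define t where "t = Abs (Abs (App (App (Var 4) (Abs (App (App (Var 3) (Var 2)) (Var 1))))
                                   (App (App (Var 3) (Var 1)) (Var 0))))"
  show "replicate 3 (omega T) \<turnstile> t : omega T"
    by (auto simp: t_def omega_def numeral_3_eq_3 intro!: typing.intros)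
  fix ns :: "nat list"
  assume "length ns = 3"
  then obtain n a b where ns: "ns = [n, a, b]"
    by (auto simp: numeral_3_eq_3 length_Suc_conv)
  define U where "U = Abs (App (App (church b) (Var 2)) (Var 1))"
  have "App (App (church n) U) (App (App (church a) (Var 1)) (Var 0))
      \<rightarrow>\<^sub>\<beta>\<^sup>* (App (Var 1) ^^ (if n = 0 then a else b)) (Var 0)"
  proof (cases n)
    case 0
    have "App (App (church 0) U) (App (App (church a) (Var 1)) (Var 0))
        \<rightarrow>\<^sub>\<beta>\<^sup>* App (App (church a) (Var 1)) (Var 0)"
      using beta_reds_church_App[of 0] by simp
    also have "\<dots> \<rightarrow>\<^sub>\<beta>\<^sup>* (App (Var 1) ^^ a) (Var 0)"
      by (rule beta_reds_church_App)
    finally show ?thesis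
      using 0 by simp
  next
    case (Suc n')
    have "App (App (church n) U) (App (App (church a) (Var 1)) (Var 0))
        \<rightarrow>\<^sub>\<beta>\<^sup>* App U ((App U ^^ n') (App (App (church a) (Var 1)) (Var 0)))"
      using Suc beta_reds_church_App[of n U] by simp
    also have "\<dots> \<rightarrow>\<^sub>\<beta>\<^sup>* App (App (church b) (Var 1)) (Var 0)"
      using beta_reds_red[of "App (App (church b) (Var 2)) (Var 1)"] by (simp add: U_def)
    also have "\<dots> \<rightarrow>\<^sub>\<beta>\<^sup>* (App (Var 1) ^^ b) (Var 0)"
      by (rule beta_reds_church_App)
    finally show ?thesis
      using Suc by simp
  qed
  then have "Abs (Abs (App (App (church n) U) (App (App (church a) (Var 1)) (Var 0))))
      \<rightarrow>\<^sub>\<beta>\<^sup>* church (if n = 0 then a else b)"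
    unfolding church_def[of "if n = 0 then a else b"] by (intro beta_reds_Abs)
  then show "subst_all t (map church ns) =\<^sub>\<beta>\<^sub>\<eta> church (if ns ! 0 = 0 then ns ! 1 else ns ! 2)"
    by (simp add: ns t_def U_def beta_reds_conv cong: if_cong split del: if_split)
qed

lemma ExtPoly_definable: "ExtPoly k f \<Longrightarrow> definable (omega T) k f"
proof (induction rule: ExtPoly.induct)
  case (ep_comp m h k gs)
  then show ?case by (intro definable_comp) auto
qed (rule definable_const definable_proj definable_add definable_mult definable_ifzero; assumption?)+

section \<open>Tuples of numerals\<close>

definition tuple :: "nat \<Rightarrow> (nat \<Rightarrow> nat) \<Rightarrow> dB" where
  "tuple s V = Abs (apps (Var 0) (map (\<lambda>j. church (V j)) [0..<s]))"

definition tuple_proj :: "nat \<Rightarrow> nat \<Rightarrow> dB" where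
  "tuple_proj s j = (Abs ^^ s) (bound_vars s ! j)"

definition remap :: "(nat \<Rightarrow> nat option) \<Rightarrow> (nat \<Rightarrow> nat) \<Rightarrow> nat \<Rightarrow> nat" where
  "remap \<pi> V j = (case \<pi> j of None \<Rightarrow> 0 | Some i \<Rightarrow> V i)"

definition remap_bounded :: "nat \<Rightarrow> (nat \<Rightarrow> nat option) \<Rightarrow> bool" where
  "remap_bounded s \<pi> \<longleftrightarrow> (\<forall>j<s. \<forall>i. \<pi> j = Some i \<longrightarrow> i < s)"

text \<open>\<open>tuple_remap s \<pi>\<close> is \<open>\<lambda>t p. t (\<lambda>x\<^sub>0 \<dots> x\<^sub>s\<^sub>-\<^sub>1. p y\<^sub>0 \<dots> y\<^sub>s\<^sub>-\<^sub>1)\<close>, where \<open>y\<^sub>j\<close> is \<open>x\<^sub>i\<close>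
  if \<open>\<pi> j = Some i\<close> and the numeral \<open>0\<close> if \<open>\<pi> j = None\<close>.\<close>

definition remap_args :: "nat \<Rightarrow> (nat \<Rightarrow> nat option) \<Rightarrow> dB list" where
  "remap_args s \<pi> = map (\<lambda>j. case \<pi> j of None \<Rightarrow> church 0 | Some i \<Rightarrow> bound_vars s ! i) [0..<s]"

definition tuple_remap :: "nat \<Rightarrow> (nat \<Rightarrow> nat option) \<Rightarrow> dB" where
  "tuple_remap s \<pi> = Abs (Abs (App (Var 1) ((Abs ^^ s) (apps (Var s) (remap_args s \<pi>)))))"

lemma closed_tuple [simp]: "closed (tuple s V)"
  by (simp add: tuple_def)

lemma vars_below_remap_args:
  "remap_bounded s \<pi> \<Longrightarrow> u \<in> set (remap_args s \<pi>) \<Longrightarrow> vars_below s u"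
  by (auto simp: remap_args_def remap_bounded_def bound_vars_nth split: option.splits)

lemma beta_reds_tuple_App: "App (tuple s V) u \<rightarrow>\<^sub>\<beta>\<^sup>* apps u (map (\<lambda>j. church (V j)) [0..<s])"
  using beta_reds_red[of "apps (Var 0) (map (\<lambda>j. church (V j)) [0..<s])" u]
  by (simp add: tuple_def comp_def)

lemma beta_reds_tuple_proj:
  assumes "j < s"
  shows "App (tuple s V) (tuple_proj s j) \<rightarrow>\<^sub>\<beta>\<^sup>* church (V j)"
proof -
  let ?cs = "map (\<lambda>j. church (V j)) [0..<s]"
  have "App (tuple s V) (tuple_proj s j) \<rightarrow>\<^sub>\<beta>\<^sup>* apps ((Abs ^^ length ?cs) (bound_vars s ! j)) ?cs"
    using beta_reds_tuple_App by (simp add: tuple_proj_def)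
  also have "\<dots> \<rightarrow>\<^sub>\<beta>\<^sup>* subst_all (bound_vars s ! j) ?cs"
    by (rule beta_reds_funpow_Abs_apps) simp
  also have "subst_all (bound_vars s ! j) ?cs = church (V j)"
    using assms subst_all_bound_vars_nth[of ?cs j] by simp
  finally show ?thesis .
qed

lemma beta_reds_tuple_remap:
  assumes bounded: "remap_bounded s \<pi>"
  shows "App (tuple_remap s \<pi>) (tuple s V) \<rightarrow>\<^sub>\<beta>\<^sup>* tuple s (remap \<pi> V)"
proof -
  let ?cs = "map (\<lambda>j. church (V j)) [0..<s]"
  define body where "body = apps (Var s) (remap_args s \<pi>)"
  have "vars_below 1 ((Abs ^^ s) body)"
    using vars_below_remap_args[OF bounded] vars_below_mono[of s _ "Suc s"] by (auto simp: body_def)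
  then have "subst ((Abs ^^ s) body) (tuple s V) 1 = (Abs ^^ s) body"
    by (rule subst_vars_below) simp
  moreover have "tuple_remap s \<pi> = Abs (Abs (App (Var 1) ((Abs ^^ s) body)))"
    by (simp add: tuple_remap_def body_def)
  ultimately have "App (tuple_remap s \<pi>) (tuple s V) \<rightarrow>\<^sub>\<beta>\<^sup>* Abs (App (tuple s V) ((Abs ^^ s) body))"
    using beta_reds_red[of "Abs (App (Var 1) ((Abs ^^ s) body))" "tuple s V"] by simp
  also have "\<dots> \<rightarrow>\<^sub>\<beta>\<^sup>* Abs (apps ((Abs ^^ length ?cs) body) ?cs)"
    using beta_reds_tuple_App by (simp add: beta_reds_Abs)
  also have "\<dots> \<rightarrow>\<^sub>\<beta>\<^sup>* Abs (subst_all body ?cs)"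
    by (intro beta_reds_Abs beta_reds_funpow_Abs_apps) simp
  also have "subst_all body ?cs = apps (Var 0) (map (\<lambda>j. church (remap \<pi> V j)) [0..<s])"
  proof -
    have "subst_all (remap_args s \<pi> ! j) ?cs = church (remap \<pi> V j)" if "j < s" for j
      using that bounded subst_all_bound_vars_nth[of ?cs]
      by (auto simp: remap_args_def remap_def remap_bounded_def split: option.split)
    then have "map (\<lambda>u. subst_all u ?cs) (remap_args s \<pi>) = map (\<lambda>j. church (remap \<pi> V j)) [0..<s]"
      by (intro nth_equalityI) (auto simp: remap_args_def)
    moreover have "subst_all (Var s) ?cs = Var 0"
      by (simp add: subst_all_Var)
    ultimately show ?thesis
      by (simp add: body_def)
  qed
  finally show ?thesis
    by (simp add: tuple_def)
qed

lemma beta_reds_tuple_remap_iterate: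
  assumes "remap_bounded s \<pi>"
  shows "(App (tuple_remap s \<pi>) ^^ m) (tuple s V) \<rightarrow>\<^sub>\<beta>\<^sup>* tuple s ((remap \<pi> ^^ m) V)"
proof (induction m)
  case 0
  show ?case by simp
next
  case (Suc m)
  have "App (tuple_remap s \<pi>) ((App (tuple_remap s \<pi>) ^^ m) (tuple s V))
      \<rightarrow>\<^sub>\<beta>\<^sup>* App (tuple_remap s \<pi>) (tuple s ((remap \<pi> ^^ m) V))"
    using Suc.IH by (rule beta_reds_AppR)
  moreover have "App (tuple_remap s \<pi>) (tuple s ((remap \<pi> ^^ m) V))
      \<rightarrow>\<^sub>\<beta>\<^sup>* tuple s (remap \<pi> ((remap \<pi> ^^ m) V))"
    by (rule beta_reds_tuple_remap[OF assms])
  ultimately show ?case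
    by (simp only: funpow.simps comp_apply rtranclp_trans)
qed

lemma beta_reds_church_tuple_remap:
  assumes "remap_bounded s \<pi>" and "j < s"
  shows "App (apps (church m) [tuple_remap s \<pi>, tuple s V]) (tuple_proj s j)
      \<rightarrow>\<^sub>\<beta>\<^sup>* church ((remap \<pi> ^^ m) V j)"
proof -
  have "apps (church m) [tuple_remap s \<pi>, tuple s V] \<rightarrow>\<^sub>\<beta>\<^sup>* tuple s ((remap \<pi> ^^ m) V)"
    using beta_reds_church_App[of m "tuple_remap s \<pi>" "tuple s V"]
      beta_reds_tuple_remap_iterate[OF assms(1)] by (simp add: rtranclp_trans)
  then have "App (apps (church m) [tuple_remap s \<pi>, tuple s V]) (tuple_proj s j)
      \<rightarrow>\<^sub>\<beta>\<^sup>* App (tuple s ((remap \<pi> ^^ m) V)) (tuple_proj s j)"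
    by (rule beta_reds_AppL)
  also have "\<dots> \<rightarrow>\<^sub>\<beta>\<^sup>* church ((remap \<pi> ^^ m) V j)"
    by (rule beta_reds_tuple_proj[OF assms(2)])
  finally show ?thesis .
qed

lemma typing_tuple: "\<Gamma> \<turnstile> tuple s V : tuple_ty s"
  unfolding tuple_def tuple_ty_def
  by (intro typ_abs typing_apps) (auto intro: typ_var simp: alpha_def typing_church)

lemma typing_tuple_proj: "j < s \<Longrightarrow> \<Gamma> \<turnstile> tuple_proj s j : arrows s alpha alpha"
  unfolding tuple_proj_def by (intro typing_funpow_Abs typing_bound_vars) simp

lemma typing_tuple_remap:
  assumes "remap_bounded s \<pi>"
  shows "\<Gamma> \<turnstile> tuple_remap s \<pi> : tuple_ty s \<rightarrow> tuple_ty s"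
proof -
  let ?\<Delta> = "arrows s alpha alpha # tuple_ty s # \<Gamma>"
  have "replicate s alpha @ ?\<Delta> \<turnstile> u : alpha" if u_in: "u \<in> set (remap_args s \<pi>)" for u
  proof -
    obtain j where "j < s" and u: "u = (case \<pi> j of None \<Rightarrow> church 0 | Some i \<Rightarrow> bound_vars s ! i)"
      using u_in unfolding remap_args_def by auto
    then show ?thesis
      using assms typing_bound_vars[OF nth_mem, of _ s alpha ?\<Delta>]
      by (auto simp: remap_bounded_def alpha_def typing_church split: option.split)
  qed
  then have "replicate s alpha @ ?\<Delta> \<turnstile> apps (Var s) (remap_args s \<pi>) : alpha"
    by (intro typing_apps typ_var) (auto simp: nth_append remap_args_def)
  then have "?\<Delta> \<turnstile> (Abs ^^ s) (apps (Var s) (remap_args s \<pi>)) : arrows s alpha alpha"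
    by (rule typing_funpow_Abs)
  moreover have "?\<Delta> \<turnstile> Var 1 : arrows s alpha alpha \<rightarrow> alpha"
    by (rule typ_var) (auto simp: tuple_ty_def)
  ultimately have "?\<Delta> \<turnstile> App (Var 1) ((Abs ^^ s) (apps (Var s) (remap_args s \<pi>))) : alpha"
    by (rule typ_app[rotated])
  then show ?thesis
    unfolding tuple_remap_def tuple_ty_def by (intro typ_abs)
qed

section \<open>Tests on iterated tuples\<close>

text \<open>\<open>\<lambda>b p r f x y z w. b (\<lambda>_. r f x y z w) (p f x y z w)\<close>.  The test \<open>b\<close> is a numeral
  of type \<open>alpha = omega Base\<close> only, so it can merely choose between terms of base type:
  both branches are \<open>\<eta>\<close>-expanded down to \<open>Base\<close>, and \<open>\<eta>\<close>-conversion removes the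
  expansion again.\<close>

definition ifzero_expanded :: dB where
  "ifzero_expanded = Abs (Abs (Abs (Abs (Abs (Abs (Abs (Abs
     (App (App (Var 7) (Abs (apps (Var 6) [Var 5, Var 4, Var 3, Var 2, Var 1])))
          (apps (Var 6) [Var 4, Var 3, Var 2, Var 1, Var 0])))))))))"

lemma closed_ifzero_expanded [simp]: "closed ifzero_expanded"
  by (simp add: ifzero_expanded_def)

lemma typing_ifzero_expanded:
  "\<Gamma> \<turnstile> ifzero_expanded : alpha \<rightarrow> omega (\<sigma> \<rightarrow> alpha) \<rightarrow> omega (\<sigma> \<rightarrow> alpha) \<rightarrow> omega (\<sigma> \<rightarrow> alpha)"
  unfolding ifzero_expanded_def omega_def alpha_def by (auto intro!: typing.intros)

lemma ifzero_expanded_conv: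
  "apps ifzero_expanded [church n, church a, church b] =\<^sub>\<beta>\<^sub>\<eta> church (if n = 0 then a else b)"
proof -
  define U where "U = Abs (apps (church b) [Var 5, Var 4, Var 3, Var 2, Var 1])"
  have bound_vars_5: "bound_vars 5 = [Var 4, Var 3, Var 2, Var 1, Var 0]"
    by (simp add: bound_vars_def numeral_eq_Suc upt_rec)
  define body where "body = Abs (Abs (Abs (Abs (Abs
     (App (App (Var 7) (Abs (apps (Var 6) [Var 5, Var 4, Var 3, Var 2, Var 1])))
          (apps (Var 6) [Var 4, Var 3, Var 2, Var 1, Var 0]))))))"
  have "ifzero_expanded = (Abs ^^ length [church n, church a, church b]) body"
    by (simp add: ifzero_expanded_def body_def)
  moreover have "apps ((Abs ^^ length [church n, church a, church b]) body) [church n, church a, church b]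
      \<rightarrow>\<^sub>\<beta>\<^sup>* subst_all body [church n, church a, church b]"
    by (rule beta_reds_funpow_Abs_apps) simp
  ultimately have "apps ifzero_expanded [church n, church a, church b]
      \<rightarrow>\<^sub>\<beta>\<^sup>* subst_all body [church n, church a, church b]"
    by simp
  also have "subst_all body [church n, church a, church b]
      = Abs (Abs (Abs (Abs (Abs (App (App (church n) U) (apps (church a) (bound_vars 5)))))))"
    by (simp add: body_def U_def bound_vars_5)
  also have "\<dots> = (Abs ^^ 5) (App (App (church n) U) (apps (church a) (bound_vars 5)))"
    by (simp add: numeral_eq_Suc)
  also have "\<dots> \<rightarrow>\<^sub>\<beta>\<^sup>* (Abs ^^ 5) (apps (church (if n = 0 then a else b)) (bound_vars 5))"
  proof (intro beta_reds_funpow_Abs)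
    show "App (App (church n) U) (apps (church a) (bound_vars 5))
        \<rightarrow>\<^sub>\<beta>\<^sup>* apps (church (if n = 0 then a else b)) (bound_vars 5)"
    proof (cases n)
      case 0
      then show ?thesis using beta_reds_church_App[of 0] by simp
    next
      case (Suc n')
      have "App (App (church n) U) (apps (church a) (bound_vars 5))
          \<rightarrow>\<^sub>\<beta>\<^sup>* App U ((App U ^^ n') (apps (church a) (bound_vars 5)))"
        using Suc beta_reds_church_App[of n U] by simp
      also have "\<dots> \<rightarrow>\<^sub>\<beta>\<^sup>* apps (church b) (bound_vars 5)"
        using beta_reds_red[of "apps (church b) [Var 5, Var 4, Var 3, Var 2, Var 1]"]
        by (simp add: U_def bound_vars_5)
      finally show ?thesis
        using Suc by simp
    qed
  qed
  also have "(Abs ^^ 5) (apps (church (if n = 0 then a else b)) (bound_vars 5))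
      =\<^sub>\<beta>\<^sub>\<eta> church (if n = 0 then a else b)"
    by (rule eta_conv_bound_vars) simp
  finally show ?thesis .
qed

lemma definable_remap_test:
  assumes bounded: "remap_bounded s \<pi>" and "j < s"
  shows "definable (omega (tuple_ty s)) 3 (\<lambda>xs. if (remap \<pi> ^^ (xs ! 0)) V j = 0 then xs ! 1 else xs ! 2)"
proof -
  let ?W = "omega (tuple_ty s)"
  define test where "test m = App (apps m [tuple_remap s \<pi>, tuple s V]) (tuple_proj s j)" for m
  show ?thesis
  proof (rule definable_by_body)
    have "replicate 3 ?W \<turnstile> Var 2 : (tuple_ty s \<rightarrow> tuple_ty s) \<rightarrow> tuple_ty s \<rightarrow> tuple_ty s"
      by (rule typ_var) (simp_all add: numeral_3_eq_3 omega_def)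
    then have "replicate 3 ?W \<turnstile> apps (Var 2) [tuple_remap s \<pi>, tuple s V] : tuple_ty s"
      using typ_app[OF typ_app typing_tuple] typing_tuple_remap[OF bounded] by simp
    then have "replicate 3 ?W \<turnstile> test (Var 2) : alpha"
      unfolding test_def tuple_ty_def using typing_tuple_proj[OF \<open>j < s\<close>] by (rule typ_app)
    moreover have "replicate 3 ?W \<turnstile> ifzero_expanded : alpha \<rightarrow> ?W \<rightarrow> ?W \<rightarrow> ?W"
      using typing_ifzero_expanded[of _ "arrows s alpha alpha"] by (simp add: tuple_ty_def)
    moreover have "replicate 3 ?W \<turnstile> Var 1 : ?W" "replicate 3 ?W \<turnstile> Var 0 : ?W"
      by (auto intro!: typ_var simp: numeral_3_eq_3)
    ultimately show "replicate 3 ?W \<turnstile> apps ifzero_expanded [test (Var 2), Var 1, Var 0] : ?W"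
      by (auto intro: typ_app)
    fix ns :: "nat list"
    assume "length ns = 3"
    then obtain m a b where ns: "ns = [m, a, b]"
      by (auto simp: numeral_3_eq_3 length_Suc_conv)
    have "subst_all (apps ifzero_expanded [test (Var 2), Var 1, Var 0]) (map church ns)
        = apps ifzero_expanded [test (church m), church a, church b]"
      using typing_closed[OF typing_tuple_remap[OF bounded]] typing_closed[OF typing_tuple_proj[OF \<open>j < s\<close>]]
      by (simp add: ns test_def)
    also have "\<dots> \<rightarrow>\<^sub>\<beta>\<^sup>* apps ifzero_expanded [church ((remap \<pi> ^^ m) V j), church a, church b]"
      unfolding apps_Cons[of ifzero_expanded] test_def
      by (intro beta_reds_apps beta_reds_AppR beta_reds_church_tuple_remap assms)
    also have "\<dots> =\<^sub>\<beta>\<^sub>\<eta> church (if (remap \<pi> ^^ (ns ! 0)) V j = 0 then ns ! 1 else ns ! 2)"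
      using ifzero_expanded_conv by (simp add: ns cong: if_cong split del: if_split)
    finally show "subst_all (apps ifzero_expanded [test (Var 2), Var 1, Var 0]) (map church ns)
        =\<^sub>\<beta>\<^sub>\<eta> church (if (remap \<pi> ^^ (ns ! 0)) V j = 0 then ns ! 1 else ns ! 2)" .
  qed
qed

lemma definable_indicator_test:
  assumes "remap_bounded s \<pi>" and "j < s"
    and indicator: "\<And>m. (remap \<pi> ^^ m) V j = of_bool (P m)"
  shows "definable (omega (tuple_ty s)) 3 (\<lambda>xs. if P (xs ! 0) then xs ! 1 else xs ! 2)"
proof -
  have "definable (omega (tuple_ty s)) 3
      (\<lambda>xs. (\<lambda>ys. if (remap \<pi> ^^ (ys ! 0)) V j = 0 then ys ! 1 else ys ! 2) [xs ! 0, xs ! 2, xs ! 1])"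
    by (intro definable_comp3 definable_remap_test definable_proj assms) simp_all
  then show ?thesis
    by (rule definable_cong) (simp add: indicator)
qed

lemma definable_case_split:
  fixes c :: "nat \<Rightarrow> nat" and N :: nat
  assumes "0 < k"
    and "\<forall>n<N. definable W 3 (\<lambda>xs. if c (xs ! 0) = n then xs ! 1 else xs ! 2)"
    and "\<forall>n<N. definable W k (g n)"
    and "definable W k e"
  shows "definable W k (\<lambda>xs. if c (xs ! 0) < N then g (c (xs ! 0)) xs else e xs)"
  using assms(2-4)
proof (induction N arbitrary: e)
  case 0
  then show ?case by (simp add: definable_cong)
next
  case (Suc N)
  have "definable W k (\<lambda>xs. (\<lambda>ys. if c (ys ! 0) = N then ys ! 1 else ys ! 2) [xs ! 0, g N xs, e xs])"
    using Suc.prems \<open>0 < k\<close> by (intro definable_comp3 definable_proj) auto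
  then have "definable W k (\<lambda>xs. if c (xs ! 0) = N then g N xs else e xs)"
    by (rule definable_cong) simp
  then have "definable W k (\<lambda>xs. if c (xs ! 0) < N then g (c (xs ! 0)) xs
                                 else if c (xs ! 0) = N then g N xs else e xs)"
    using Suc.prems by (intro Suc.IH) auto
  then show ?case
    by (rule definable_cong) (auto simp: less_Suc_eq)
qed

definition shift_remap :: "nat \<Rightarrow> nat option" where
  "shift_remap j = (if j = 0 then None else Some (j - 1))"

definition rotate_remap :: "nat \<Rightarrow> nat \<Rightarrow> nat option" where
  "rotate_remap l j = (if j < l then Some ((j + l - 1) mod l) else None)"

lemma remap_shift_iterate: "(remap shift_remap ^^ m) (\<lambda>i. of_bool (i = 0)) j = of_bool (m = j)"
  by (induction m arbitrary: j) (auto simp: remap_def shift_remap_def)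

lemma remap_rotate_iterate:
  assumes "0 < l"
  shows "(remap (rotate_remap l) ^^ m) (\<lambda>i. of_bool (i = 0)) j = of_bool (j < l \<and> m mod l = j)"
proof (induction m arbitrary: j)
  case 0
  then show ?case using assms by auto
next
  case (Suc m)
  have "m mod l = (j + l - 1) mod l \<longleftrightarrow> Suc m mod l = j" if "j < l"
    using that assms by (cases j) (auto simp: mod_Suc)
  then show ?case
    using Suc assms by (auto simp: remap_def rotate_remap_def)
qed

lemma definable_if_le:
  assumes "l < s"
  shows "definable (omega (tuple_ty s)) 3 (\<lambda>xs. if xs ! 0 \<le> l then xs ! 1 else xs ! 2)"
proof -
  have "definable (omega (tuple_ty s)) 3 (\<lambda>xs. if xs ! 0 = n then xs ! 1 else xs ! 2)"
    if "n < Suc l" for n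
    using that assms
    by (intro definable_indicator_test[where \<pi>=shift_remap and j=n and V="\<lambda>i. of_bool (i = 0)"])
      (auto simp: remap_bounded_def shift_remap_def remap_shift_iterate)
  then have "definable (omega (tuple_ty s)) 3 (\<lambda>xs. if xs ! 0 < Suc l then xs ! 1 else xs ! 2)"
    by (intro definable_case_split[where c="\<lambda>x. x" and g="\<lambda>n xs. xs ! 1" and e="\<lambda>xs. xs ! 2"]
        definable_proj allI impI) auto
  then show ?thesis
    by (rule definable_cong) auto
qed

lemma definable_nth_mod:
  assumes "0 < l" and "l \<le> s"
  shows "definable (omega (tuple_ty s)) (Suc l) (\<lambda>xs. xs ! Suc (xs ! 0 mod l))"
proof -
  have "definable (omega (tuple_ty s)) 3 (\<lambda>xs. if xs ! 0 mod l = n then xs ! 1 else xs ! 2)"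
    if "n < l" for n
    using that assms
    by (intro definable_indicator_test[where \<pi>="rotate_remap l" and j=n and V="\<lambda>i. of_bool (i = 0)"])
      (auto simp: remap_bounded_def rotate_remap_def remap_rotate_iterate
        intro: less_le_trans[OF mod_less_divisor])
  then have "definable (omega (tuple_ty s)) (Suc l)
      (\<lambda>xs. if xs ! 0 mod l < l then xs ! Suc (xs ! 0 mod l) else xs ! 0)"
    by (intro definable_case_split[where c="\<lambda>x. x mod l" and g="\<lambda>n xs. xs ! Suc n" and e="\<lambda>xs. xs ! 0"]
        definable_proj allI impI) auto
  then show ?thesis
    by (rule definable_cong) (simp add: assms)
qed

lemma G_eventually_definable:
  "G k f \<Longrightarrow> eventually (\<lambda>s. definable (omega (tuple_ty s)) k f) sequentially"
proof (induction rule: G.induct)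
  case (g_extpoly k f)
  then show ?case by (simp add: ExtPoly_definable)
next
  case (g_f1 l)
  show ?case
    using eventually_ge_at_top[of l] by eventually_elim (use g_f1 in \<open>simp add: definable_nth_mod\<close>)
next
  case (g_f2 l)
  show ?case
    using eventually_gt_at_top[of l] by eventually_elim (rule definable_if_le)
next
  case (g_comp m h k gs)
  have "eventually (\<lambda>s. \<forall>j\<in>{..<m}. definable (omega (tuple_ty s)) k (gs j)) sequentially"
    using g_comp.IH(2) by (intro eventually_ball_finite) auto
  with g_comp.IH(1) show ?case
    by eventually_elim (simp add: definable_comp)
qed

theorem theorem1:
  fixes k :: nat and f :: "nat list \<Rightarrow> nat"
  assumes "in_G k f"
  shows "finite {s::nat. 0 < s \<and>
           \<not> (\<exists>E. (\<forall>ns. length ns = k \<longrightarrow>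
                      beta_eta_conv (apps E (map church ns)) (church (f ns)))
                 \<and> typing [] E (arrows k (omega (tuple_ty s)) (omega (tuple_ty s))))}"
proof -
  obtain g where "G k g" and fg: "\<And>xs. length xs = k \<Longrightarrow> f xs = g xs"
    using assms unfolding in_G_def by blast
  have "eventually (\<lambda>s. definable (omega (tuple_ty s)) k f) sequentially"
    using G_eventually_definable[OF \<open>G k g\<close>] by eventually_elim (erule definable_cong, simp add: fg)
  then have "finite {s. \<not> definable (omega (tuple_ty s)) k f}"
    by (simp add: eventually_cofinite[symmetric] cofinite_eq_sequentially)
  then show ?thesis
    by (rule finite_subset[rotated]) (auto simp: definable_def)
qed

end
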